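(* Let $\Gamma=\operatorname{HNN}(G,H,\theta)$ be a non-ascending HNN extension. Then the normal closures in $\Gamma$ of the two quasi-kernels $K_{-1}$ and $K_1$ coincide.
   Context: Let $G$ be a group, $H\le G$ a subgroup and $\theta:H\to G$ an injective homomorphism; $\Gamma=\operatorname{HNN}(G,H,\theta)=\langle G,\tau\mid \tau^{-1}h\tau=\theta(h)\ (h\in H)\rangle$. Set $H_{-1}=H$, $H_1=\theta(H)$. The extension is non-ascending if $H\neq G$ and $\theta(H)\neq G$. Fix sets $S_{-1},S_1$ of representatives of the left cosets of $H_{-1}$, resp. $H_1$, in $G$ with $1\in S_{-1}\cap S_1$. Every $g\in\Gamma$ has a unique normal form $g=g_1\tau^{\varepsilon_1}g_2\tau^{\varepsilon_2}\cdots g_n\tau^{\varepsilon_n}g_{n+1}$ with $n\ge0$, $\varepsilon_i\in\{\pm1\}$, $g_i\in S_{-\varepsilon_i}$ for $1\le i\le n$, $g_{n+1}\in G$, and $g_i=1\Rightarrow\varepsilon_{i-1}=\varepsilon_i$ for $2\le i\le n$. Then $n$ is the length of $g$; if $n\ge1$, $\varepsilon_1$ is the type and $g_1$ the initial letter of $g$. For $\varepsilon\in\{\pm1\}$, $T_\varepsilon$ is the set of elements of length $\ge1$ and type $\varepsilon$, and $T_\varepsilon^\dagger\subseteq T_\varepsilon$ the subset of those with initial letter $1$. The quasi-kernels are $K_\varepsilon=\bigcap_{r\in\Gamma\setminus T_\varepsilon^\dagger} rHr^{-1}$. *)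

theory Defs
  imports "HOL-Algebra.Algebra"
begin

text \<open>Letters: Inl g stands for g in G, Inr True for the stable letter tau,
  Inr False for tau inverse.\<close>

type_synonym 'a hnn_letter = "'a + bool"

definition hnn_words :: "('a, 'm) monoid_scheme \<Rightarrow> 'a hnn_letter list set" where
  "hnn_words G = lists (Inl ` carrier G \<union> {Inr True, Inr False})"

inductive hnn_step ::
  "('a, 'm) monoid_scheme \<Rightarrow> 'a set \<Rightarrow> ('a \<Rightarrow> 'a) \<Rightarrow> 'a hnn_letter list \<Rightarrow> 'a hnn_letter list \<Rightarrow> bool"
  for G H \<theta> where
  mult: "\<lbrakk>u \<in> hnn_words G; v \<in> hnn_words G; g \<in> carrier G; g' \<in> carrier G\<rbrakk>
     \<Longrightarrow> hnn_step G H \<theta> (u @ [Inl g, Inl g'] @ v) (u @ [Inl (g \<otimes>\<^bsub>G\<^esub> g')] @ v)"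
| one: "\<lbrakk>u \<in> hnn_words G; v \<in> hnn_words G\<rbrakk>
     \<Longrightarrow> hnn_step G H \<theta> (u @ [Inl \<one>\<^bsub>G\<^esub>] @ v) (u @ v)"
| tau_inv: "\<lbrakk>u \<in> hnn_words G; v \<in> hnn_words G\<rbrakk>
     \<Longrightarrow> hnn_step G H \<theta> (u @ [Inr True, Inr False] @ v) (u @ v)"
| inv_tau: "\<lbrakk>u \<in> hnn_words G; v \<in> hnn_words G\<rbrakk>
     \<Longrightarrow> hnn_step G H \<theta> (u @ [Inr False, Inr True] @ v) (u @ v)"
| conj: "\<lbrakk>u \<in> hnn_words G; v \<in> hnn_words G; h \<in> H\<rbrakk>
     \<Longrightarrow> hnn_step G H \<theta> (u @ [Inr False, Inl h, Inr True] @ v) (u @ [Inl (\<theta> h)] @ v)"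

definition hnn_eq ::
  "('a, 'm) monoid_scheme \<Rightarrow> 'a set \<Rightarrow> ('a \<Rightarrow> 'a) \<Rightarrow> 'a hnn_letter list \<Rightarrow> 'a hnn_letter list \<Rightarrow> bool" where
  "hnn_eq G H \<theta> x y \<longleftrightarrow> x \<in> hnn_words G \<and> (symclp (hnn_step G H \<theta>))\<^sup>*\<^sup>* x y"

definition hnn_cls ::
  "('a, 'm) monoid_scheme \<Rightarrow> 'a set \<Rightarrow> ('a \<Rightarrow> 'a) \<Rightarrow> 'a hnn_letter list \<Rightarrow> 'a hnn_letter list set" where
  "hnn_cls G H \<theta> w = {w'. hnn_eq G H \<theta> w w'}"

definition HNN ::
  "('a, 'm) monoid_scheme \<Rightarrow> 'a set \<Rightarrow> ('a \<Rightarrow> 'a) \<Rightarrow> 'a hnn_letter list set monoid" where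
  "HNN G H \<theta> =
     \<lparr>carrier = hnn_cls G H \<theta> ` hnn_words G,
      monoid.mult = (\<lambda>A B. {w. \<exists>a\<in>A. \<exists>b\<in>B. hnn_eq G H \<theta> (a @ b) w}),
      monoid.one = hnn_cls G H \<theta> []\<rparr>"

definition hnn_emb :: "('a, 'm) monoid_scheme \<Rightarrow> 'a set \<Rightarrow> ('a \<Rightarrow> 'a) \<Rightarrow> 'a \<Rightarrow> 'a hnn_letter list set" where
  "hnn_emb G H \<theta> g = hnn_cls G H \<theta> [Inl g]"

definition hnn_tau :: "('a, 'm) monoid_scheme \<Rightarrow> 'a set \<Rightarrow> ('a \<Rightarrow> 'a) \<Rightarrow> 'a hnn_letter list set" where
  "hnn_tau G H \<theta> = hnn_cls G H \<theta> [Inr True]"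

definition hnn_tau_pow :: "('a, 'm) monoid_scheme \<Rightarrow> 'a set \<Rightarrow> ('a \<Rightarrow> 'a) \<Rightarrow> int \<Rightarrow> 'a hnn_letter list set" where
  "hnn_tau_pow G H \<theta> e = (if e = 1 then hnn_tau G H \<theta> else inv\<^bsub>HNN G H \<theta>\<^esub> (hnn_tau G H \<theta>))"

definition non_ascending :: "('a, 'm) monoid_scheme \<Rightarrow> 'a set \<Rightarrow> ('a \<Rightarrow> 'a) \<Rightarrow> bool" where
  "non_ascending G H \<theta> \<longleftrightarrow> H \<noteq> carrier G \<and> \<theta> ` H \<noteq> carrier G"

definition left_transversal :: "('a, 'm) monoid_scheme \<Rightarrow> 'a set \<Rightarrow> 'a set \<Rightarrow> bool" where
  "left_transversal G K S \<longleftrightarrow> S \<subseteq> carrier G \<and> (\<forall>g\<in>carrier G. \<exists>!s\<in>S. g \<in> s <#\<^bsub>G\<^esub> K)"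

definition hnn_H :: "'a set \<Rightarrow> ('a \<Rightarrow> 'a) \<Rightarrow> int \<Rightarrow> 'a set" where
  "hnn_H H \<theta> e = (if e = -1 then H else \<theta> ` H)"

text \<open>A normal form g_1 tau^e_1 ... g_n tau^e_n g_{n+1} is represented by the list
  [(g_1,e_1),...,(g_n,e_n)] together with g_{n+1}.  S (-1), S 1 are the chosen
  transversals S_{-1}, S_1.\<close>
definition nf_valid :: "('a, 'm) monoid_scheme \<Rightarrow> (int \<Rightarrow> 'a set) \<Rightarrow> ('a \<times> int) list \<times> 'a \<Rightarrow> bool" where
  "nf_valid G S nf \<longleftrightarrow>
     (let ps = fst nf; g = snd nf in
       (\<forall>i<length ps. snd (ps ! i) \<in> {-1, 1} \<and> fst (ps ! i) \<in> S (- snd (ps ! i)))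
     \<and> g \<in> carrier G
     \<and> (\<forall>i. 0 < i \<and> i < length ps \<longrightarrow> fst (ps ! i) = \<one>\<^bsub>G\<^esub> \<longrightarrow> snd (ps ! (i - 1)) = snd (ps ! i)))"

definition nf_eval :: "('a, 'm) monoid_scheme \<Rightarrow> 'a set \<Rightarrow> ('a \<Rightarrow> 'a) \<Rightarrow> ('a \<times> int) list \<times> 'a \<Rightarrow> 'a hnn_letter list set" where
  "nf_eval G H \<theta> nf =
     foldr (\<lambda>(g, e) acc. hnn_emb G H \<theta> g \<otimes>\<^bsub>HNN G H \<theta>\<^esub> hnn_tau_pow G H \<theta> e \<otimes>\<^bsub>HNN G H \<theta>\<^esub> acc)
       (fst nf) (hnn_emb G H \<theta> (snd nf))"

definition normal_form :: "('a, 'm) monoid_scheme \<Rightarrow> 'a set \<Rightarrow> ('a \<Rightarrow> 'a) \<Rightarrow> (int \<Rightarrow> 'a set)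
    \<Rightarrow> 'a hnn_letter list set \<Rightarrow> ('a \<times> int) list \<times> 'a" where
  "normal_form G H \<theta> S x = (THE nf. nf_valid G S nf \<and> nf_eval G H \<theta> nf = x)"

definition hnn_T :: "('a, 'm) monoid_scheme \<Rightarrow> 'a set \<Rightarrow> ('a \<Rightarrow> 'a) \<Rightarrow> (int \<Rightarrow> 'a set) \<Rightarrow> int
    \<Rightarrow> 'a hnn_letter list set set" where
  "hnn_T G H \<theta> S e = {x \<in> carrier (HNN G H \<theta>).
      fst (normal_form G H \<theta> S x) \<noteq> [] \<and> snd (hd (fst (normal_form G H \<theta> S x))) = e}"

definition hnn_T_dagger :: "('a, 'm) monoid_scheme \<Rightarrow> 'a set \<Rightarrow> ('a \<Rightarrow> 'a) \<Rightarrow> (int \<Rightarrow> 'a set) \<Rightarrow> int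
    \<Rightarrow> 'a hnn_letter list set set" where
  "hnn_T_dagger G H \<theta> S e = {x \<in> hnn_T G H \<theta> S e. fst (hd (fst (normal_form G H \<theta> S x))) = \<one>\<^bsub>G\<^esub>}"

definition conj_set :: "('b, 'n) monoid_scheme \<Rightarrow> 'b \<Rightarrow> 'b set \<Rightarrow> 'b set" where
  "conj_set \<Gamma> r A = {r \<otimes>\<^bsub>\<Gamma>\<^esub> a \<otimes>\<^bsub>\<Gamma>\<^esub> inv\<^bsub>\<Gamma>\<^esub> r | a. a \<in> A}"

definition quasi_kernel :: "('a, 'm) monoid_scheme \<Rightarrow> 'a set \<Rightarrow> ('a \<Rightarrow> 'a) \<Rightarrow> (int \<Rightarrow> 'a set) \<Rightarrow> int
    \<Rightarrow> 'a hnn_letter list set set" where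
  "quasi_kernel G H \<theta> S e =
     (\<Inter>r \<in> carrier (HNN G H \<theta>) - hnn_T_dagger G H \<theta> S e.
        conj_set (HNN G H \<theta>) r (hnn_emb G H \<theta> ` H))"

definition normal_closure :: "('b, 'n) monoid_scheme \<Rightarrow> 'b set \<Rightarrow> 'b set" where
  "normal_closure \<Gamma> A = generate \<Gamma> (\<Union>g \<in> carrier \<Gamma>. conj_set \<Gamma> g A)"

end

theory Submission
  imports Defs
begin

text \<open>For e = \<plusminus>1 pick a \<in> G outside H_e and put c = a \<tau>^{-e}. If the normal form of r does
  not start with the letter 1 \<tau>^e, then that of \<tau>^{-e} r starts with 1 \<tau>^{-e}, and multiplying
  by a replaces this initial 1 by the representative of a H_e, which is not 1. So c maps
  \<Gamma> - T_e^\<dagger> into \<Gamma> - T_{-e}^\<dagger>, whence K_{-e} \<subseteq> c K_e c^{-1}; thus each quasi-kernel lies in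
  the normal closure of the other.

  This needs the normal form theorem for HNN extensions, proved by van der Waerden's method:
  the letters of G and \<tau>^{\<plusminus>1} act on the set of normal forms, the action respects the defining
  relations, and every word acting on the empty normal form produces a normal form equal
  to it in \<Gamma>.\<close>

section \<open>Conjugation\<close>

lemma (in group) inv_mult_cancel_left:
  "x \<in> carrier G \<Longrightarrow> y \<in> carrier G \<Longrightarrow> inv x \<otimes> (x \<otimes> y) = y"
  by (simp add: m_assoc[symmetric])

lemma (in group) mult_inv_cancel_left:
  "x \<in> carrier G \<Longrightarrow> y \<in> carrier G \<Longrightarrow> x \<otimes> (inv x \<otimes> y) = y"
  by (simp add: m_assoc[symmetric])

lemma (in group) conj_set_carrier:
  "r \<in> carrier G \<Longrightarrow> A \<subseteq> carrier G \<Longrightarrow> conj_set G r A \<subseteq> carrier G"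
  unfolding conj_set_def by auto

lemma (in group) conjugates_subset_if_subset_conj_set:
  assumes c: "c \<in> carrier G" and B: "B \<subseteq> carrier G" and AB: "A \<subseteq> conj_set G c B"
  shows "(\<Union>g\<in>carrier G. conj_set G g A) \<subseteq> (\<Union>g\<in>carrier G. conj_set G g B)"
proof
  fix x assume "x \<in> (\<Union>g\<in>carrier G. conj_set G g A)"
  then obtain g k' where g: "g \<in> carrier G" and k': "k' \<in> B"
    and x: "x = g \<otimes> (c \<otimes> k' \<otimes> inv c) \<otimes> inv g"
    using AB unfolding conj_set_def by blast
  have "x = (g \<otimes> c) \<otimes> k' \<otimes> inv (g \<otimes> c)"
    using x g c k' B by (auto simp: m_assoc inv_mult_group)
  with g c k' show "x \<in> (\<Union>g\<in>carrier G. conj_set G g B)"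
    unfolding conj_set_def by blast
qed

lemma (in group) normal_closure_eq_if_conj:
  assumes "c \<in> carrier G" "d \<in> carrier G" "A \<subseteq> carrier G" "B \<subseteq> carrier G"
    and "A \<subseteq> conj_set G c B" "B \<subseteq> conj_set G d A"
  shows "normal_closure G A = normal_closure G B"
  unfolding normal_closure_def
  using conjugates_subset_if_subset_conj_set[of c B A] conjugates_subset_if_subset_conj_set[of d A B]
    assms
  by (simp add: subset_antisym)

lemma (in group) Inter_conj_set_subset_conj_set:
  assumes U: "U \<subseteq> carrier G" and c: "c \<in> carrier G" and I: "I \<subseteq> carrier G" "I \<noteq> {}"
    and IJ: "\<And>r. r \<in> I \<Longrightarrow> c \<otimes> r \<in> J"
  shows "(\<Inter>r\<in>J. conj_set G r U) \<subseteq> conj_set G c (\<Inter>r\<in>I. conj_set G r U)"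
proof
  fix k assume k: "k \<in> (\<Inter>r\<in>J. conj_set G r U)"
  obtain r0 where "r0 \<in> I" using I(2) by blast
  then have "k \<in> conj_set G (c \<otimes> r0) U" using k IJ by blast
  then have kc: "k \<in> carrier G" using conj_set_carrier c I(1) \<open>r0 \<in> I\<close> U by blast
  define k' where "k' = inv c \<otimes> k \<otimes> c"
  have "k' \<in> conj_set G r U" if r: "r \<in> I" for r
  proof -
    obtain u where u: "u \<in> U" "k = (c \<otimes> r) \<otimes> u \<otimes> inv (c \<otimes> r)"
      using k IJ[OF r] unfolding conj_set_def by blast
    have "r \<in> carrier G" "u \<in> carrier G" using r u(1) I(1) U by auto
    then have "k' = r \<otimes> u \<otimes> inv r"
      using u(2) c by (simp add: k'_def m_assoc inv_mult_group inv_mult_cancel_left)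
    then show ?thesis using u(1) unfolding conj_set_def by blast
  qed
  moreover have "k = c \<otimes> k' \<otimes> inv c"
    using c kc by (simp add: k'_def m_assoc mult_inv_cancel_left)
  ultimately show "k \<in> conj_set G c (\<Inter>r\<in>I. conj_set G r U)"
    unfolding conj_set_def by blast
qed

section \<open>Words and the HNN group\<close>

locale hnn_presentation = group G for G :: "('a, 'm) monoid_scheme" (structure) +
  fixes H :: "'a set" and \<theta> :: "'a \<Rightarrow> 'a"
  assumes H_subset: "H \<subseteq> carrier G" and \<theta>_closed: "\<theta> \<in> H \<rightarrow> carrier G"
begin

abbreviation W where "W \<equiv> hnn_words G"
abbreviation weq where "weq \<equiv> hnn_eq G H \<theta>"
abbreviation cls where "cls \<equiv> hnn_cls G H \<theta>"
abbreviation \<Gamma> where "\<Gamma> \<equiv> HNN G H \<theta>"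

lemma words_Nil [simp]: "[] \<in> W"
  and words_Cons_Inl [simp]: "Inl x # w \<in> W \<longleftrightarrow> x \<in> carrier G \<and> w \<in> W"
  and words_Cons_Inr [simp]: "Inr b # w \<in> W \<longleftrightarrow> w \<in> W"
  and words_append [simp]: "u @ v \<in> W \<longleftrightarrow> u \<in> W \<and> v \<in> W"
  by (cases b; auto simp: hnn_words_def)+

lemma hnn_step_words: "hnn_step G H \<theta> x y \<Longrightarrow> x \<in> W \<and> y \<in> W"
  by (induction rule: hnn_step.induct) (use H_subset \<theta>_closed in auto)

lemma hnn_step_append:
  "hnn_step G H \<theta> x y \<Longrightarrow> p \<in> W \<Longrightarrow> q \<in> W \<Longrightarrow> hnn_step G H \<theta> (p @ x @ q) (p @ y @ q)"
  by (induction rule: hnn_step.induct) (metis append_assoc hnn_step.intros words_append)+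

lemma weq_words: "weq x y \<Longrightarrow> x \<in> W \<and> y \<in> W"
proof -
  assume "weq x y"
  then have "(symclp (hnn_step G H \<theta>))\<^sup>*\<^sup>* x y" "x \<in> W" by (simp_all add: hnn_eq_def)
  then show ?thesis
    by (induction rule: rtranclp_induct) (auto simp: symclp_def dest: hnn_step_words)
qed

lemma weq_refl: "x \<in> W \<Longrightarrow> weq x x"
  by (simp add: hnn_eq_def)

lemma weq_sym: "weq x y \<Longrightarrow> weq y x"
  using weq_words[of x y] by (auto simp: hnn_eq_def intro: rtranclp_symclp_sym)

lemma weq_trans [trans]: "weq x y \<Longrightarrow> weq y z \<Longrightarrow> weq x z"
  by (auto simp: hnn_eq_def)

lemma weq_if_step: "hnn_step G H \<theta> x y \<Longrightarrow> weq x y"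
  using hnn_step_words[of x y] by (auto simp: hnn_eq_def)

lemma weq_append:
  assumes "weq x y" "p \<in> W" "q \<in> W"
  shows "weq (p @ x @ q) (p @ y @ q)"
proof -
  have "(symclp (hnn_step G H \<theta>))\<^sup>*\<^sup>* x y" using assms(1) by (simp add: hnn_eq_def)
  then have "(symclp (hnn_step G H \<theta>))\<^sup>*\<^sup>* (p @ x @ q) (p @ y @ q)"
  proof (induction rule: rtranclp_induct)
    case (step y z)
    then have "symclp (hnn_step G H \<theta>) (p @ y @ q) (p @ z @ q)"
      using hnn_step_append assms(2,3) by (auto simp: symclp_def)
    with step.IH show ?case by simp
  qed simp
  then show ?thesis using weq_words[OF assms(1)] assms(2,3) by (simp add: hnn_eq_def)
qed

lemma weq_prefix: "weq x y \<Longrightarrow> p \<in> W \<Longrightarrow> weq (p @ x) (p @ y)"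
  using weq_append[of x y p "[]"] by simp

lemma weq_suffix: "weq x y \<Longrightarrow> q \<in> W \<Longrightarrow> weq (x @ q) (y @ q)"
  using weq_append[of x y "[]" q] by simp

lemma weq_mult_letters:
  "g \<in> carrier G \<Longrightarrow> g' \<in> carrier G \<Longrightarrow> w \<in> W \<Longrightarrow> weq (Inl g # Inl g' # w) (Inl (g \<otimes> g') # w)"
  by (intro weq_if_step hnn_step.mult[where u = "[]", simplified]) auto

lemma weq_one_letter: "w \<in> W \<Longrightarrow> weq (Inl \<one> # w) w"
  by (intro weq_if_step hnn_step.one[where u = "[]", simplified]) auto

lemma weq_tau_cancel: "w \<in> W \<Longrightarrow> weq (Inr b # Inr (\<not> b) # w) w"
  by (cases b) (auto intro!: weq_if_step hnn_step.tau_inv[where u = "[]", simplified]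
    hnn_step.inv_tau[where u = "[]", simplified])

lemma weq_tau_conj: "h \<in> H \<Longrightarrow> w \<in> W \<Longrightarrow> weq (Inr False # Inl h # Inr True # w) (Inl (\<theta> h) # w)"
  by (intro weq_if_step hnn_step.conj[where u = "[]", simplified]) auto

lemma cls_eq_iff: "x \<in> W \<Longrightarrow> cls x = cls y \<longleftrightarrow> weq x y"
  using weq_refl weq_sym weq_trans unfolding hnn_cls_def by blast

lemma carrier_HNN: "carrier \<Gamma> = cls ` W"
  by (simp add: HNN_def)

lemma one_HNN: "\<one>\<^bsub>\<Gamma>\<^esub> = cls []"
  by (simp add: HNN_def)

lemma mult_HNN: "x \<in> W \<Longrightarrow> y \<in> W \<Longrightarrow> cls x \<otimes>\<^bsub>\<Gamma>\<^esub> cls y = cls (x @ y)"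
proof -
  assume x: "x \<in> W" and y: "y \<in> W"
  have "weq (x @ y) (a @ b)" if "weq x a" "weq y b" for a b
    using weq_suffix[OF that(1) y] weq_prefix[OF that(2)] weq_words[OF that(1)] weq_trans by blast
  then have "{w. \<exists>a\<in>cls x. \<exists>b\<in>cls y. weq (a @ b) w} = cls (x @ y)"
    using weq_refl[OF x] weq_refl[OF y] weq_trans unfolding hnn_cls_def by blast
  then show ?thesis by (simp add: HNN_def)
qed

primrec inv_letter :: "'a hnn_letter \<Rightarrow> 'a hnn_letter" where
  "inv_letter (Inl g) = Inl (inv g)"
| "inv_letter (Inr b) = Inr (\<not> b)"

definition inv_word :: "'a hnn_letter list \<Rightarrow> 'a hnn_letter list" where
  "inv_word w = rev (map inv_letter w)"

lemma inv_word_words: "w \<in> W \<Longrightarrow> inv_word w \<in> W"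
  by (induction w) (auto simp: inv_word_def hnn_words_def)

lemma weq_inv_letter: "[l] \<in> W \<Longrightarrow> w \<in> W \<Longrightarrow> weq (inv_letter l # l # w) w"
proof (cases l)
  case (Inl g)
  assume "[l] \<in> W" "w \<in> W"
  then have "weq (Inl (inv g) # Inl g # w) (Inl \<one> # w)"
    using Inl weq_mult_letters[of "inv g" g w] by simp
  with \<open>w \<in> W\<close> show ?thesis using Inl weq_one_letter weq_trans by fastforce
next
  case (Inr b)
  assume "w \<in> W"
  then show ?thesis using Inr weq_tau_cancel[of w "\<not> b"] by simp
qed

lemma weq_inv_word: "w \<in> W \<Longrightarrow> weq (inv_word w @ w) []"
proof (induction w)
  case (Cons l w)
  then have "weq (inv_word w @ (inv_letter l # l # w)) (inv_word w @ w)"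
    using weq_prefix weq_inv_letter inv_word_words by (simp add: hnn_words_def)
  with Cons show ?case by (auto simp: inv_word_def hnn_words_def intro: weq_trans)
qed (simp add: inv_word_def weq_refl)

lemma group_HNN: "group \<Gamma>"
proof (rule groupI)
  fix x y z assume "x \<in> carrier \<Gamma>" "y \<in> carrier \<Gamma>" "z \<in> carrier \<Gamma>"
  then show "x \<otimes>\<^bsub>\<Gamma>\<^esub> y \<in> carrier \<Gamma>" and "x \<otimes>\<^bsub>\<Gamma>\<^esub> y \<otimes>\<^bsub>\<Gamma>\<^esub> z = x \<otimes>\<^bsub>\<Gamma>\<^esub> (y \<otimes>\<^bsub>\<Gamma>\<^esub> z)"
    by (auto simp: carrier_HNN mult_HNN)
next
  fix x assume "x \<in> carrier \<Gamma>"
  then obtain w where w: "w \<in> W" "x = cls w" by (auto simp: carrier_HNN)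
  then show "\<one>\<^bsub>\<Gamma>\<^esub> \<otimes>\<^bsub>\<Gamma>\<^esub> x = x" by (simp add: one_HNN mult_HNN)
  have "cls (inv_word w) \<otimes>\<^bsub>\<Gamma>\<^esub> x = \<one>\<^bsub>\<Gamma>\<^esub>"
    using w inv_word_words weq_inv_word cls_eq_iff by (simp add: mult_HNN one_HNN)
  then show "\<exists>y\<in>carrier \<Gamma>. y \<otimes>\<^bsub>\<Gamma>\<^esub> x = \<one>\<^bsub>\<Gamma>\<^esub>"
    using w(1) inv_word_words by (auto simp: carrier_HNN)
qed (simp add: carrier_HNN one_HNN)

sublocale HNN: group \<Gamma>
  by (rule group_HNN)

lemma tau_pow_cls: "e \<in> {-1, 1} \<Longrightarrow> hnn_tau_pow G H \<theta> e = cls [Inr (e = 1)]"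
proof -
  assume e: "e \<in> {-1, 1}"
  have "cls [Inr False] \<otimes>\<^bsub>\<Gamma>\<^esub> cls [Inr True] = \<one>\<^bsub>\<Gamma>\<^esub>"
    using weq_tau_cancel[of "[]" False] cls_eq_iff by (simp add: mult_HNN one_HNN)
  then have "inv\<^bsub>\<Gamma>\<^esub> (cls [Inr True]) = cls [Inr False]"
    by (intro HNN.inv_equality) (auto simp: carrier_HNN)
  with e show ?thesis by (auto simp: hnn_tau_pow_def hnn_tau_def)
qed

end

section \<open>Coset representatives\<close>

locale hnn_normal_forms = group G for G :: "('a, 'm) monoid_scheme" (structure) +
  fixes H :: "'a set" and \<theta> :: "'a \<Rightarrow> 'a" and S :: "int \<Rightarrow> 'a set"
  assumes subgroup_H: "subgroup H G"
    and \<theta>_hom: "\<theta> \<in> hom (G\<lparr>carrier := H\<rparr>) G"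
    and \<theta>_inj: "inj_on \<theta> H"
    and transversal: "e \<in> {-1, 1} \<Longrightarrow> left_transversal G (hnn_H H \<theta> e) (S e)"
    and one_in_transversal: "e \<in> {-1, 1} \<Longrightarrow> \<one> \<in> S e"
begin

lemma \<theta>_group_hom: "group_hom (G\<lparr>carrier := H\<rparr>) G \<theta>"
  using subgroup.subgroup_is_group[OF subgroup_H is_group] \<theta>_hom
  by (simp add: group_hom_def group_hom_axioms_def is_group)

lemma \<theta>_mult: "h \<in> H \<Longrightarrow> h' \<in> H \<Longrightarrow> \<theta> (h \<otimes> h') = \<theta> h \<otimes> \<theta> h'"
  using group_hom.hom_mult[OF \<theta>_group_hom] by simp

lemma \<theta>_one: "\<theta> \<one> = \<one>"
  using group_hom.hom_one[OF \<theta>_group_hom] by simp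

sublocale hnn_presentation G H \<theta>
  using subgroup.subset[OF subgroup_H] \<theta>_hom by unfold_locales (auto simp: hom_def)

abbreviation HH where "HH e \<equiv> hnn_H H \<theta> e"

lemma subgroup_HH: "e \<in> {-1, 1} \<Longrightarrow> subgroup (HH e) G"
  using subgroup_H group_hom.img_is_subgroup[OF \<theta>_group_hom] by (auto simp: hnn_H_def)

lemma HH_carrier: "e \<in> {-1, 1} \<Longrightarrow> x \<in> HH e \<Longrightarrow> x \<in> carrier G"
  using subgroup.mem_carrier[OF subgroup_HH] by blast

lemma transversal_carrier: "e \<in> {-1, 1} \<Longrightarrow> s \<in> S e \<Longrightarrow> s \<in> carrier G"
  using transversal by (auto simp: left_transversal_def)

definition coset_rep :: "int \<Rightarrow> 'a \<Rightarrow> 'a" where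
  "coset_rep e y = (THE s. s \<in> S e \<and> y \<in> s <# HH e)"

definition coset_part :: "int \<Rightarrow> 'a \<Rightarrow> 'a" where
  "coset_part e y = inv (coset_rep e y) \<otimes> y"

lemma transversal_ex1:
  assumes "e \<in> {-1, 1}" "y \<in> carrier G"
  shows "\<exists>!s. s \<in> S e \<and> y \<in> s <# HH e"
  using transversal[OF assms(1)] assms(2) by (auto simp: left_transversal_def)

lemma coset_rep_mult:
  assumes e: "e \<in> {-1, 1}" and s: "s \<in> S e" and k: "k \<in> HH e"
  shows "coset_rep e (s \<otimes> k) = s" and "coset_part e (s \<otimes> k) = k"
proof -
  have sk: "s \<in> carrier G" "k \<in> carrier G" using e s k transversal_carrier HH_carrier by auto
  then have "s \<otimes> k \<in> s <# HH e" by (auto simp: l_coset_def k)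
  then show rep: "coset_rep e (s \<otimes> k) = s"
    unfolding coset_rep_def using transversal_ex1[OF e] s sk by (blast intro: the1_equality)
  show "coset_part e (s \<otimes> k) = k"
    using sk by (simp add: coset_part_def rep inv_mult_cancel_left)
qed

lemma coset_decomp:
  assumes e: "e \<in> {-1, 1}" and y: "y \<in> carrier G"
  shows "coset_rep e y \<in> S e" and "coset_part e y \<in> HH e"
    and "coset_rep e y \<otimes> coset_part e y = y"
proof -
  obtain s k where s: "s \<in> S e" and k: "k \<in> HH e" and y_eq: "y = s \<otimes> k"
    using transversal_ex1[OF assms] by (auto simp: l_coset_def)
  then show "coset_rep e y \<in> S e" "coset_part e y \<in> HH e"
    "coset_rep e y \<otimes> coset_part e y = y"
    using coset_rep_mult[OF e s k] by simp_all
qed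

lemma coset_rep_transversal: "e \<in> {-1, 1} \<Longrightarrow> s \<in> S e \<Longrightarrow> coset_rep e s = s \<and> coset_part e s = \<one>"
  using coset_rep_mult[of e s \<one>] subgroup.one_closed[OF subgroup_HH] transversal_carrier by simp

lemma coset_rep_eq_one_iff:
  assumes "e \<in> {-1, 1}" "y \<in> carrier G"
  shows "coset_rep e y = \<one> \<longleftrightarrow> y \<in> HH e"
  using coset_decomp[OF assms] coset_rep_mult(1)[OF assms(1) one_in_transversal[OF assms(1)], of y]
  by (auto simp: assms(2) HH_carrier[OF assms(1)])

lemma transversal_Int_subgroup: "e \<in> {-1, 1} \<Longrightarrow> s \<in> S e \<Longrightarrow> s \<in> HH e \<Longrightarrow> s = \<one>"
  using coset_rep_transversal coset_rep_eq_one_iff transversal_carrier by metis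

lemma transversal_eq_one_if_coset_rep_mult:
  assumes e: "e \<in> {-1, 1}" and x: "x \<in> HH e" and s: "s \<in> S e"
    and rep: "coset_rep e (x \<otimes> s) = \<one>"
  shows "s = \<one>"
proof -
  have xs: "x \<in> carrier G" "s \<in> carrier G" using e x s HH_carrier transversal_carrier by auto
  have "x \<otimes> s \<in> HH e" using coset_rep_eq_one_iff[OF e] rep xs by simp
  then have "inv x \<otimes> (x \<otimes> s) \<in> HH e"
    using subgroup.m_closed[OF subgroup_HH[OF e] subgroup.m_inv_closed[OF subgroup_HH[OF e] x]]
    by blast
  then show ?thesis using transversal_Int_subgroup[OF e s] xs by (simp add: inv_mult_cancel_left)
qed

lemma coset_rep_mult_left:
  assumes e: "e \<in> {-1, 1}" and x: "x \<in> carrier G" and y: "y \<in> carrier G"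
  shows "coset_rep e (x \<otimes> y) = coset_rep e (x \<otimes> coset_rep e y)"
    and "coset_part e (x \<otimes> y) = coset_part e (x \<otimes> coset_rep e y) \<otimes> coset_part e y"
proof -
  define s k where "s = coset_rep e y" and "k = coset_part e y"
  define s' k' where "s' = coset_rep e (x \<otimes> s)" and "k' = coset_part e (x \<otimes> s)"
  have s: "s \<in> S e" "k \<in> HH e" "s \<otimes> k = y" using coset_decomp[OF e y] by (simp_all add: s_def k_def)
  have sc: "s \<in> carrier G" using transversal_carrier[OF e s(1)] .
  have s': "s' \<in> S e" "k' \<in> HH e" "s' \<otimes> k' = x \<otimes> s"
    using coset_decomp[OF e m_closed[OF x sc]] by (simp_all add: s'_def k'_def)
  have kc: "k \<in> carrier G" "k' \<in> carrier G" using HH_carrier[OF e] s(2) s'(2) by auto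
  have "x \<otimes> y = s' \<otimes> (k' \<otimes> k)"
    using s(3) s'(3) x sc kc transversal_carrier[OF e s'(1)] by (metis m_assoc)
  moreover have "k' \<otimes> k \<in> HH e" using subgroup.m_closed[OF subgroup_HH[OF e] s'(2) s(2)] .
  ultimately show "coset_rep e (x \<otimes> y) = coset_rep e (x \<otimes> coset_rep e y)"
    and "coset_part e (x \<otimes> y) = coset_part e (x \<otimes> coset_rep e y) \<otimes> coset_part e y"
    using coset_rep_mult[OF e s'(1)] by (simp_all add: s_def k_def s'_def k'_def)
qed

text \<open>conj_tau e is the isomorphism h \<mapsto> \<tau>^{-e} h \<tau>^e from H_{-e} onto H_e.\<close>
definition conj_tau :: "int \<Rightarrow> 'a \<Rightarrow> 'a" where
  "conj_tau e h = (if e = 1 then \<theta> h else inv_into H \<theta> h)"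

lemma conj_tau_HH: "e \<in> {-1, 1} \<Longrightarrow> h \<in> HH (-e) \<Longrightarrow> conj_tau e h \<in> HH e"
  by (auto simp: conj_tau_def hnn_H_def inv_into_f_f[OF \<theta>_inj])

lemma conj_tau_mult:
  assumes e: "e \<in> {-1, 1}" and h: "h \<in> HH (-e)" "h' \<in> HH (-e)"
  shows "conj_tau e (h \<otimes> h') = conj_tau e h \<otimes> conj_tau e h'"
proof (cases "e = 1")
  case True then show ?thesis using h \<theta>_mult by (simp add: conj_tau_def hnn_H_def)
next
  case False
  then obtain a b where ab: "a \<in> H" "b \<in> H" "h = \<theta> a" "h' = \<theta> b"
    using e h by (auto simp: hnn_H_def)
  then have "h \<otimes> h' = \<theta> (a \<otimes> b)" "a \<otimes> b \<in> H"
    using \<theta>_mult subgroup.m_closed[OF subgroup_H] by auto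
  with False ab show ?thesis by (simp add: conj_tau_def inv_into_f_f[OF \<theta>_inj])
qed

lemma conj_tau_one: "conj_tau e \<one> = \<one>"
  using \<theta>_one inv_into_f_f[OF \<theta>_inj subgroup.one_closed[OF subgroup_H]]
  by (simp add: conj_tau_def)

section \<open>The action on normal forms\<close>

definition reduced :: "('a \<times> int) list \<Rightarrow> bool" where
  "reduced ps \<longleftrightarrow> (\<forall>(s, e) \<in> set ps. e \<in> {-1, 1} \<and> s \<in> S (-e))
      \<and> successively (\<lambda>(_, e) (s', e'). s' = \<one> \<longrightarrow> e = e') ps"

lemma reduced_simps [simp]:
  "reduced []"
  "reduced [(s, e)] \<longleftrightarrow> e \<in> {-1, 1} \<and> s \<in> S (-e)"
  "reduced ((s, e) # (s', e') # ps) \<longleftrightarrow>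
     e \<in> {-1, 1} \<and> s \<in> S (-e) \<and> (s' = \<one> \<longrightarrow> e = e') \<and> reduced ((s', e') # ps)"
  by (auto simp: reduced_def)

lemma reduced_ConsD:
  "reduced ((s, e) # ps) \<Longrightarrow> e \<in> {-1, 1} \<and> -e \<in> {-1, 1} \<and> s \<in> S (-e) \<and> reduced ps"
  by (cases ps) auto

lemma nf_valid_iff: "nf_valid G S nf \<longleftrightarrow> reduced (fst nf) \<and> snd nf \<in> carrier G"
proof -
  have shift: "(\<forall>i. 0 < i \<and> i < length ps \<longrightarrow> P i) \<longleftrightarrow> (\<forall>i. Suc i < length ps \<longrightarrow> P (Suc i))"
    for ps :: "('a \<times> int) list" and P :: "nat \<Rightarrow> bool"
    by (metis Suc_pred zero_less_Suc)
  show ?thesis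
    unfolding nf_valid_def reduced_def successively_conv_nth all_set_conv_all_nth Let_def shift
    by (auto simp: split_beta)
qed

text \<open>Left multiplication by x: write x s = s' h with s' \<in> S_{-e} and h \<in> H_{-e},
  and push h through the stable letter, h \<tau>^e = \<tau>^e (conj_tau e h).\<close>
fun lmult_nf :: "'a \<Rightarrow> ('a \<times> int) list \<times> 'a \<Rightarrow> ('a \<times> int) list \<times> 'a" where
  "lmult_nf x ([], g) = ([], x \<otimes> g)"
| "lmult_nf x ((s, e) # ps, g) =
     apfst (Cons (coset_rep (-e) (x \<otimes> s), e))
       (lmult_nf (conj_tau e (coset_part (-e) (x \<otimes> s))) (ps, g))"

fun tau_nf :: "int \<Rightarrow> ('a \<times> int) list \<times> 'a \<Rightarrow> ('a \<times> int) list \<times> 'a" where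
  "tau_nf e ([], g) = ([(\<one>, e)], g)"
| "tau_nf e ((s, e') # ps, g) = (if s = \<one> \<and> e' = -e then (ps, g) else ((\<one>, e) # (s, e') # ps, g))"

lemma lmult_nf_apfst_Cons:
  "lmult_nf x (apfst (Cons (s, e)) nf) =
     apfst (Cons (coset_rep (-e) (x \<otimes> s), e)) (lmult_nf (conj_tau e (coset_part (-e) (x \<otimes> s))) nf)"
  by (cases nf) simp

lemma lmult_nf_subgroup_Cons:
  assumes e: "e \<in> {-1, 1}" and x: "x \<in> HH (-e)"
  shows "lmult_nf x ((\<one>, e) # ps, g) = apfst (Cons (\<one>, e)) (lmult_nf (conj_tau e x) (ps, g))"
proof -
  have "-e \<in> {-1, 1}" using e by auto
  then have "coset_rep (-e) (\<one> \<otimes> x) = \<one>" "coset_part (-e) (\<one> \<otimes> x) = x"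
    using coset_rep_mult one_in_transversal x by auto
  then show ?thesis using HH_carrier[OF \<open>-e \<in> {-1, 1}\<close> x] by simp
qed

lemma tau_nf_apfst_Cons: "tau_nf e (apfst (Cons (\<one>, -e)) nf) = nf"
  by (cases nf) simp

text \<open>That is, s \<tau>^e followed by x \<cdot> (ps, g) is again reduced.\<close>
lemma lmult_nf_head:
  assumes red: "reduced ((s, e) # ps)" and x: "x \<in> HH e"
    and hd: "fst (lmult_nf x (ps, g)) = (\<one>, e') # qs"
  shows "e' = e"
proof (cases ps)
  case (Cons p ps')
  obtain s2 e2 where p: "p = (s2, e2)" by fastforce
  have e2: "e2 = e'" and rep: "coset_rep (-e2) (x \<otimes> s2) = \<one>" using hd Cons p by auto
  have e: "e \<in> {-1, 1}" "e2 \<in> {-1, 1}" and s2: "s2 \<in> S (-e2)" and link: "s2 = \<one> \<longrightarrow> e = e2"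
    using red Cons p by (auto dest: reduced_ConsD)
  show ?thesis
  proof (rule ccontr)
    assume "e' \<noteq> e"
    with e e2 have "-e2 = e" by auto
    then have "s2 = \<one>" using transversal_eq_one_if_coset_rep_mult e(1) x s2 rep by auto
    with link e2 \<open>e' \<noteq> e\<close> show False by simp
  qed
qed (use hd in simp)

lemma lmult_nf_valid: "nf_valid G S nf \<Longrightarrow> x \<in> carrier G \<Longrightarrow> nf_valid G S (lmult_nf x nf)"
proof (induction x nf rule: lmult_nf.induct)
  case (1 x g)
  then show ?case by (simp add: nf_valid_iff)
next
  case (2 x s e ps g)
  define y where "y = x \<otimes> s"
  define x' where "x' = conj_tau e (coset_part (-e) y)"
  from "2.prems" have e: "e \<in> {-1, 1}" "-e \<in> {-1, 1}"
    and s: "s \<in> S (-e)" and ps: "nf_valid G S (ps, g)"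
    by (auto simp: nf_valid_iff dest: reduced_ConsD)
  have y: "y \<in> carrier G" using y_def "2.prems"(2) transversal_carrier[OF e(2) s] by simp
  have x': "x' \<in> HH e"
    using conj_tau_HH[OF e(1)] coset_decomp(2)[OF e(2) y] by (simp add: x'_def)
  have IH: "nf_valid G S (lmult_nf x' (ps, g))"
    using "2.IH"[folded y_def, folded x'_def] ps HH_carrier[OF e(1) x'] by simp
  have rep: "coset_rep (-e) y \<in> S (-e)" using coset_decomp(1)[OF e(2) y] .
  have "reduced ((coset_rep (-e) y, e) # fst (lmult_nf x' (ps, g)))"
  proof (cases "fst (lmult_nf x' (ps, g))")
    case (Cons q qs)
    then show ?thesis
      using IH rep e lmult_nf_head[OF _ x', of s ps g] "2.prems"(1)
      by (cases q) (auto simp: nf_valid_iff)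
  qed (use rep e in simp)
  then show ?case using IH by (cases "lmult_nf x' (ps, g)") (simp add: nf_valid_iff y_def x'_def)
qed

lemma lmult_nf_one: "nf_valid G S nf \<Longrightarrow> lmult_nf \<one> nf = nf"
proof (induction "\<one>" nf rule: lmult_nf.induct)
  case (2 s e ps g)
  then have e: "-e \<in> {-1, 1}" and s: "s \<in> S (-e)" and ps: "nf_valid G S (ps, g)"
    by (auto simp: nf_valid_iff dest: reduced_ConsD)
  then have "coset_rep (-e) (\<one> \<otimes> s) = s" "coset_part (-e) (\<one> \<otimes> s) = \<one>"
    using coset_rep_transversal[OF e s] transversal_carrier[OF e s] by simp_all
  then show ?case using 2 ps conj_tau_one by simp
qed (simp add: nf_valid_iff)

lemma lmult_nf_mult:
  "nf_valid G S nf \<Longrightarrow> x \<in> carrier G \<Longrightarrow> y \<in> carrier G \<Longrightarrow>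
    lmult_nf x (lmult_nf y nf) = lmult_nf (x \<otimes> y) nf"
proof (induction y nf arbitrary: x rule: lmult_nf.induct)
  case (1 y g)
  then show ?case by (simp add: nf_valid_iff m_assoc)
next
  case (2 y s e ps g)
  from "2.prems" have e: "e \<in> {-1, 1}" "-e \<in> {-1, 1}"
    and s: "s \<in> S (-e)" and ps: "nf_valid G S (ps, g)"
    by (auto simp: nf_valid_iff dest: reduced_ConsD)
  define r k where "r = coset_rep (-e) (y \<otimes> s)" and "k = coset_part (-e) (y \<otimes> s)"
  define k' where "k' = coset_part (-e) (x \<otimes> r)"
  have ys: "y \<otimes> s \<in> carrier G" using "2.prems"(3) transversal_carrier[OF e(2) s] by simp
  have r: "r \<in> carrier G" and k: "k \<in> HH (-e)"
    using coset_decomp[OF e(2) ys] transversal_carrier[OF e(2)] by (auto simp: r_def k_def)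
  have k': "k' \<in> HH (-e)" using coset_decomp(2)[OF e(2)] "2.prems"(2) r by (simp add: k'_def)
  have cocycle: "coset_rep (-e) ((x \<otimes> y) \<otimes> s) = coset_rep (-e) (x \<otimes> r)"
    "coset_part (-e) ((x \<otimes> y) \<otimes> s) = k' \<otimes> k"
    using coset_rep_mult_left[OF e(2) "2.prems"(2) ys] "2.prems"(2,3) transversal_carrier[OF e(2) s]
    by (simp_all add: m_assoc r_def k_def k'_def)
  have "lmult_nf (conj_tau e k') (lmult_nf (conj_tau e k) (ps, g)) =
      lmult_nf (conj_tau e k' \<otimes> conj_tau e k) (ps, g)"
    using "2.IH"[folded k_def, OF ps] conj_tau_HH[OF e(1)] HH_carrier[OF e(1)] k k' by simp
  then show ?case
    using cocycle conj_tau_mult[OF e(1) k' k] by (simp add: lmult_nf_apfst_Cons r_def k_def k'_def)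
qed

lemma tau_nf_valid: "e \<in> {-1, 1} \<Longrightarrow> nf_valid G S nf \<Longrightarrow> nf_valid G S (tau_nf e nf)"
  by (induction e nf rule: tau_nf.induct)
    (auto simp: nf_valid_iff one_in_transversal dest: reduced_ConsD)

lemma tau_nf_inverse: "e \<in> {-1, 1} \<Longrightarrow> nf_valid G S nf \<Longrightarrow> tau_nf e (tau_nf (-e) nf) = nf"
proof (induction "-e" nf rule: tau_nf.induct)
  case (2 s e' ps g)
  then show ?case by (cases ps) (auto simp: nf_valid_iff)
qed simp

lemma tau_nf_conj:
  assumes h: "h \<in> H" and nf: "nf_valid G S nf"
  shows "tau_nf (-1) (lmult_nf h (tau_nf 1 nf)) = lmult_nf (\<theta> h) nf"
proof -
  have hH: "h \<in> HH (-1)" and \<theta>h: "\<theta> h \<in> HH (- (-1))" using h by (simp_all add: hnn_H_def)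
  have conj: "conj_tau 1 h = \<theta> h" "conj_tau (-1) (\<theta> h) = h"
    using inv_into_f_f[OF \<theta>_inj h] by (simp_all add: conj_tau_def)
  obtain ps g where nf_eq: "nf = (ps, g)" by fastforce
  show ?thesis
  proof (cases "\<exists>rest. ps = (\<one>, -1) # rest")
    case True
    then obtain rest where ps: "ps = (\<one>, -1) # rest" by blast
    have no_cancel: "\<not> (\<exists>qs. fst (lmult_nf h (rest, g)) = (\<one>, 1) # qs)"
      using lmult_nf_head[of \<one> "-1" rest h g 1] nf hH by (auto simp: nf_eq ps nf_valid_iff)
    obtain qs g' where "lmult_nf h (rest, g) = (qs, g')" by fastforce
    with no_cancel
    have "tau_nf (-1) (lmult_nf h (rest, g)) = apfst (Cons (\<one>, -1)) (lmult_nf h (rest, g))"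
      by (cases qs) (auto split: if_split_asm)
    then show ?thesis using lmult_nf_subgroup_Cons[of "-1" "\<theta> h" rest g] \<theta>h conj
      by (simp add: nf_eq ps)
  next
    case False
    then have "tau_nf 1 nf = ((\<one>, 1) # ps, g)" by (cases ps) (auto simp: nf_eq split: if_split_asm)
    then show ?thesis
      using lmult_nf_subgroup_Cons[of 1 h ps g] hH conj tau_nf_apfst_Cons[of "-1"]
      by (simp add: nf_eq)
  qed
qed

fun letter_act :: "'a hnn_letter \<Rightarrow> ('a \<times> int) list \<times> 'a \<Rightarrow> ('a \<times> int) list \<times> 'a" where
  "letter_act (Inl x) = lmult_nf x"
| "letter_act (Inr b) = tau_nf (if b then 1 else -1)"

definition word_act :: "'a hnn_letter list \<Rightarrow> ('a \<times> int) list \<times> 'a \<Rightarrow> ('a \<times> int) list \<times> 'a" where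
  "word_act w = foldr letter_act w"

lemma word_act_simps [simp]:
  "word_act [] nf = nf"
  "word_act (l # w) nf = letter_act l (word_act w nf)"
  "word_act (u @ v) nf = word_act u (word_act v nf)"
  by (simp_all add: word_act_def)

lemma word_act_valid: "w \<in> W \<Longrightarrow> nf_valid G S nf \<Longrightarrow> nf_valid G S (word_act w nf)"
proof (induction w)
  case (Cons l w)
  then show ?case
    by (cases l) (auto simp: hnn_words_def lmult_nf_valid tau_nf_valid)
qed simp

lemma word_act_step:
  "hnn_step G H \<theta> x y \<Longrightarrow> nf_valid G S nf \<Longrightarrow> word_act x nf = word_act y nf"
proof (induction rule: hnn_step.induct)
  case (mult u v g g')
  then show ?case using lmult_nf_mult word_act_valid by simp
next
  case (one u v)
  then show ?case using lmult_nf_one word_act_valid by simp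
next
  case (tau_inv u v)
  then show ?case using tau_nf_inverse[of 1] word_act_valid by simp
next
  case (inv_tau u v)
  then show ?case using tau_nf_inverse[of "-1"] word_act_valid by simp
next
  case (conj u v h)
  then show ?case using tau_nf_conj word_act_valid by simp
qed

lemma word_act_weq: "weq x y \<Longrightarrow> nf_valid G S nf \<Longrightarrow> word_act x nf = word_act y nf"
proof -
  assume "weq x y" "nf_valid G S nf"
  have "(symclp (hnn_step G H \<theta>))\<^sup>*\<^sup>* x y" using \<open>weq x y\<close> by (simp add: hnn_eq_def)
  then show ?thesis
    by (induction rule: rtranclp_induct)
      (auto simp: symclp_def word_act_step[OF _ \<open>nf_valid G S nf\<close>])
qed

section \<open>Normal forms\<close>

fun nf_word :: "('a \<times> int) list \<times> 'a \<Rightarrow> 'a hnn_letter list" where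
  "nf_word ([], g) = [Inl g]"
| "nf_word ((s, e) # ps, g) = Inl s # Inr (e = 1) # nf_word (ps, g)"

lemma nf_word_apfst_Cons: "nf_word (apfst (Cons (s, e)) nf) = Inl s # Inr (e = 1) # nf_word nf"
  by (cases nf) simp

lemma nf_word_words: "nf_valid G S nf \<Longrightarrow> nf_word nf \<in> W"
proof (induction nf rule: nf_word.induct)
  case (2 s e ps g)
  then have e: "-e \<in> {-1, 1}" and s: "s \<in> S (-e)" and ps: "nf_valid G S (ps, g)"
    by (auto simp: nf_valid_iff dest: reduced_ConsD)
  then show ?case using 2 transversal_carrier[OF e s] by simp
qed (simp add: nf_valid_iff)

lemma tau_nf_reduced_Cons: "reduced ((s, e) # ps) \<Longrightarrow> tau_nf e (ps, g) = ((\<one>, e) # ps, g)"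
proof (cases ps)
  case (Cons p ps')
  assume red: "reduced ((s, e) # ps)"
  obtain s' e' where p: "p = (s', e')" by fastforce
  with red Cons have "e \<in> {-1, 1}" "s' = \<one> \<longrightarrow> e = e'" by simp_all
  then have "\<not> (s' = \<one> \<and> e' = -e)" by auto
  then show ?thesis using Cons p by simp
qed simp

lemma word_act_nf_word: "nf_valid G S nf \<Longrightarrow> word_act (nf_word nf) ([], \<one>) = nf"
proof (induction nf rule: nf_word.induct)
  case (2 s e ps g)
  then have e: "e \<in> {-1, 1}" "-e \<in> {-1, 1}" and s: "s \<in> S (-e)" and ps: "nf_valid G S (ps, g)"
    and red: "reduced ((s, e) # ps)"
    by (auto simp: nf_valid_iff dest: reduced_ConsD)
  have "coset_rep (-e) (s \<otimes> \<one>) = s" "coset_part (-e) (s \<otimes> \<one>) = \<one>"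
    using coset_rep_transversal[OF e(2) s] transversal_carrier[OF e(2) s] by simp_all
  moreover have "(if e = 1 then 1 else -1) = e" using e by auto
  ultimately show ?case
    using "2.IH"[OF ps] tau_nf_reduced_Cons[OF red] lmult_nf_one[OF ps] conj_tau_one by simp
qed (simp add: nf_valid_iff)

lemma weq_conj_tau:
  assumes e: "e \<in> {-1, 1}" and h: "h \<in> HH (-e)" and w: "w \<in> W"
  shows "weq (Inr (e = 1) # Inl (conj_tau e h) # w) (Inl h # Inr (e = 1) # w)"
proof (cases "e = 1")
  case True
  then have hH: "h \<in> H" and hc: "h \<in> carrier G" using h H_subset by (auto simp: hnn_H_def)
  have "weq (Inl h # Inr True # w) (Inr True # Inr False # Inl h # Inr True # w)"
    using weq_sym[OF weq_tau_cancel[of "Inl h # Inr True # w" True]] hc w by simp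
  also have "weq \<dots> (Inr True # Inl (\<theta> h) # w)"
    using weq_prefix[OF weq_tau_conj[OF hH w], of "[Inr True]"] by simp
  finally show ?thesis using True weq_sym by (simp add: conj_tau_def)
next
  case False
  then obtain a where a: "a \<in> H" "h = \<theta> a" using e h by (auto simp: hnn_H_def)
  then have ac: "a \<in> carrier G" using H_subset by blast
  have "weq (Inl (\<theta> a) # Inr False # w) (Inr False # Inl a # Inr True # Inr False # w)"
    using weq_sym[OF weq_tau_conj[OF a(1), of "Inr False # w"]] w by simp
  also have "weq \<dots> (Inr False # Inl a # w)"
    using weq_prefix[OF weq_tau_cancel[OF w, of True], of "[Inr False, Inl a]"] ac by simp
  finally show ?thesis
    using False a weq_sym inv_into_f_f[OF \<theta>_inj a(1)] by (simp add: conj_tau_def)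
qed

lemma nf_word_lmult_nf:
  "nf_valid G S nf \<Longrightarrow> x \<in> carrier G \<Longrightarrow> weq (nf_word (lmult_nf x nf)) (Inl x # nf_word nf)"
proof (induction x nf rule: lmult_nf.induct)
  case (1 x g)
  then show ?case using weq_sym[OF weq_mult_letters[of x g "[]"]] by (simp add: nf_valid_iff)
next
  case (2 x s e ps g)
  from "2.prems" have e: "e \<in> {-1, 1}" "-e \<in> {-1, 1}"
    and s: "s \<in> S (-e)" and ps: "nf_valid G S (ps, g)"
    by (auto simp: nf_valid_iff dest: reduced_ConsD)
  define y where "y = x \<otimes> s"
  define r k where "r = coset_rep (-e) y" and "k = coset_part (-e) y"
  define b where "b = (e = 1)"
  have sc: "s \<in> carrier G" using transversal_carrier[OF e(2) s] .
  have y: "y \<in> carrier G" using "2.prems"(2) sc by (simp add: y_def)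
  have r: "r \<in> carrier G" and k: "k \<in> HH (-e)" and rk: "r \<otimes> k = y"
    using coset_decomp[OF e(2) y] transversal_carrier[OF e(2)] by (auto simp: r_def k_def)
  have kc: "k \<in> carrier G" using HH_carrier[OF e(2) k] .
  have w: "nf_word (ps, g) \<in> W" using nf_word_words[OF ps] .
  have IH: "weq (nf_word (lmult_nf (conj_tau e k) (ps, g))) (Inl (conj_tau e k) # nf_word (ps, g))"
    using "2.IH"[folded y_def, folded k_def, OF ps] conj_tau_HH[OF e(1) k] HH_carrier[OF e(1)]
    by simp
  have "weq (nf_word (lmult_nf x ((s, e) # ps, g)))
      (Inl r # Inr b # Inl (conj_tau e k) # nf_word (ps, g))"
    using weq_prefix[OF IH, of "[Inl r, Inr b]"] r
    by (simp add: nf_word_apfst_Cons y_def r_def k_def b_def)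
  also have "weq \<dots> (Inl r # Inl k # Inr b # nf_word (ps, g))"
    using weq_prefix[OF weq_conj_tau[OF e(1) k w], of "[Inl r]"] r by (simp add: b_def)
  also have "weq \<dots> (Inl y # Inr b # nf_word (ps, g))"
    using weq_mult_letters[OF r kc, of "Inr b # nf_word (ps, g)"] w rk by simp
  also have "weq \<dots> (Inl x # Inl s # Inr b # nf_word (ps, g))"
    using weq_sym[OF weq_mult_letters[OF "2.prems"(2) sc, of "Inr b # nf_word (ps, g)"]] w
    by (simp add: y_def)
  finally show ?case by (simp add: b_def)
qed

lemma nf_word_tau_nf:
  assumes e: "e \<in> {-1, 1}" and nf: "nf_valid G S nf"
  shows "weq (nf_word (tau_nf e nf)) (Inr (e = 1) # nf_word nf)"
proof -
  obtain ps g where nf_eq: "nf = (ps, g)" by fastforce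
  show ?thesis
  proof (cases "\<exists>rest. ps = (\<one>, -e) # rest")
    case True
    then obtain rest where ps: "ps = (\<one>, -e) # rest" by blast
    have w: "nf_word (rest, g) \<in> W"
      using nf nf_word_words by (auto simp: nf_eq ps nf_valid_iff dest: reduced_ConsD)
    have sign: "(-e = 1) \<longleftrightarrow> \<not> (e = 1)" using e by auto
    have "weq (Inr (e = 1) # Inl \<one> # Inr (-e = 1) # nf_word (rest, g))
        (Inr (e = 1) # Inr (-e = 1) # nf_word (rest, g))"
      using weq_prefix[OF weq_one_letter, of _ "[Inr (e = 1)]"] w by simp
    also have "weq \<dots> (nf_word (rest, g))"
      using weq_tau_cancel[OF w, of "e = 1"] sign by simp
    finally show ?thesis using weq_sym by (simp add: nf_eq ps)
  next
    case False
    then have "tau_nf e nf = ((\<one>, e) # ps, g)" by (cases ps) (auto simp: nf_eq split: if_split_asm)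
    then show ?thesis using weq_one_letter nf_word_words[OF nf] by (simp add: nf_eq)
  qed
qed

lemma nf_word_word_act:
  "w \<in> W \<Longrightarrow> nf_valid G S nf \<Longrightarrow> weq (nf_word (word_act w nf)) (w @ nf_word nf)"
proof (induction w)
  case (Cons l w)
  then have valid: "nf_valid G S (word_act w nf)" and w: "w \<in> W"
    using word_act_valid by (auto simp: hnn_words_def)
  have "weq (nf_word (letter_act l (word_act w nf))) (l # nf_word (word_act w nf))"
  proof (cases l)
    case (Inl x)
    then show ?thesis using Cons.prems(1) nf_word_lmult_nf[OF valid] by simp
  next
    case (Inr b)
    then show ?thesis using nf_word_tau_nf[OF _ valid, of "if b then 1 else -1"] by auto
  qed
  also have "weq \<dots> (l # w @ nf_word nf)"
    using weq_prefix[OF Cons.IH[OF w Cons.prems(2)], of "[l]"] Cons.prems(1)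
    by (simp add: hnn_words_def)
  finally show ?case by simp
qed (simp add: weq_refl nf_word_words)

lemma nf_eval_eq_cls: "nf_valid G S (ps, g) \<Longrightarrow> nf_eval G H \<theta> (ps, g) = cls (nf_word (ps, g))"
proof (induction ps)
  case Nil
  then show ?case by (simp add: nf_eval_def hnn_emb_def)
next
  case (Cons p ps)
  obtain s e where p: "p = (s, e)" by fastforce
  with Cons.prems have e: "e \<in> {-1, 1}" "-e \<in> {-1, 1}"
    and s: "s \<in> S (-e)" and ps: "nf_valid G S (ps, g)"
    by (auto simp: nf_valid_iff dest: reduced_ConsD)
  have "nf_eval G H \<theta> ((s, e) # ps, g) =
      hnn_emb G H \<theta> s \<otimes>\<^bsub>\<Gamma>\<^esub> hnn_tau_pow G H \<theta> e \<otimes>\<^bsub>\<Gamma>\<^esub> nf_eval G H \<theta> (ps, g)"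
    by (simp add: nf_eval_def)
  also have "\<dots> = cls ([Inl s] @ [Inr (e = 1)] @ nf_word (ps, g))"
    using Cons.IH[OF ps] tau_pow_cls[OF e(1)] transversal_carrier[OF e(2) s] nf_word_words[OF ps]
    by (simp add: hnn_emb_def mult_HNN)
  finally show ?case by (simp add: p)
qed

theorem normal_form_cls:
  assumes w: "w \<in> W"
  shows "normal_form G H \<theta> S (cls w) = word_act w ([], \<one>)"
  unfolding normal_form_def
proof (rule the_equality)
  have valid: "nf_valid G S (word_act w ([], \<one>))"
    using word_act_valid[OF w] by (simp add: nf_valid_iff)
  have "weq (nf_word (word_act w ([], \<one>))) (w @ [Inl \<one>])"
    using nf_word_word_act[OF w, of "([], \<one>)"] by (simp add: nf_valid_iff)
  moreover have "weq (w @ [Inl \<one>]) w" using weq_prefix[OF weq_one_letter[of "[]"] w] by simp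
  ultimately have "cls (nf_word (word_act w ([], \<one>))) = cls w"
    using cls_eq_iff nf_word_words[OF valid] weq_trans by blast
  then show "nf_valid G S (word_act w ([], \<one>)) \<and> nf_eval G H \<theta> (word_act w ([], \<one>)) = cls w"
    using valid nf_eval_eq_cls by (metis prod.collapse)
next
  fix nf assume nf: "nf_valid G S nf \<and> nf_eval G H \<theta> nf = cls w"
  then have "weq (nf_word nf) w"
    using nf_eval_eq_cls cls_eq_iff nf_word_words by (metis prod.collapse)
  then have "word_act (nf_word nf) ([], \<one>) = word_act w ([], \<one>)"
    using word_act_weq by (simp add: nf_valid_iff)
  then show "nf = word_act w ([], \<one>)" using word_act_nf_word nf by simp
qed

section \<open>Quasi-kernels\<close>

lemma T_dagger_cls_iff:
  "w \<in> W \<Longrightarrow> cls w \<in> hnn_T_dagger G H \<theta> S e \<longleftrightarrow> (\<exists>ps. fst (word_act w ([], \<one>)) = (\<one>, e) # ps)"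
  using normal_form_cls[of w]
  by (cases "fst (word_act w ([], \<one>))") (auto simp: hnn_T_dagger_def hnn_T_def carrier_HNN)

lemma mult_notin_T_dagger:
  assumes e: "e \<in> {-1, 1}" and a: "a \<in> carrier G" "a \<notin> HH e" and w: "w \<in> W"
    and not_T: "cls w \<notin> hnn_T_dagger G H \<theta> S e"
  shows "cls (Inl a # Inr (e = -1) # w) \<notin> hnn_T_dagger G H \<theta> S (-e)"
proof -
  obtain ps g where nf: "word_act w ([], \<one>) = (ps, g)" by fastforce
  have "tau_nf (-e) (ps, g) = ((\<one>, -e) # ps, g)"
    using not_T T_dagger_cls_iff[OF w] nf by (cases ps) (auto split: if_split_asm)
  moreover have "(if e = -1 then 1 else -1) = -e" using e by auto
  moreover have "coset_rep e (a \<otimes> \<one>) \<noteq> \<one>" using coset_rep_eq_one_iff[OF e] a by simp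
  ultimately show ?thesis using T_dagger_cls_iff[of "Inl a # Inr (e = -1) # w" "-e"] a w nf by auto
qed

lemma one_notin_T_dagger: "\<one>\<^bsub>\<Gamma>\<^esub> \<notin> hnn_T_dagger G H \<theta> S e"
  using T_dagger_cls_iff[of "[]" e] by (simp add: one_HNN)

lemma emb_H_carrier: "hnn_emb G H \<theta> ` H \<subseteq> carrier \<Gamma>"
  using H_subset by (auto simp: hnn_emb_def carrier_HNN)

lemma quasi_kernel_carrier: "quasi_kernel G H \<theta> S e \<subseteq> carrier \<Gamma>"
proof -
  have "quasi_kernel G H \<theta> S e \<subseteq> conj_set \<Gamma> \<one>\<^bsub>\<Gamma>\<^esub> (hnn_emb G H \<theta> ` H)"
    unfolding quasi_kernel_def using one_notin_T_dagger HNN.one_closed by blast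
  then show ?thesis
    using HNN.conj_set_carrier[OF HNN.one_closed emb_H_carrier] by blast
qed

lemma quasi_kernel_subset_conj_set:
  assumes e: "e \<in> {-1, 1}" and proper: "HH e \<noteq> carrier G"
  shows "\<exists>c\<in>carrier \<Gamma>. quasi_kernel G H \<theta> S (-e) \<subseteq> conj_set \<Gamma> c (quasi_kernel G H \<theta> S e)"
proof -
  obtain a where a: "a \<in> carrier G" "a \<notin> HH e"
    using proper subgroup.subset[OF subgroup_HH[OF e]] by blast
  define c where "c = cls [Inl a, Inr (e = -1)]"
  have c: "c \<in> carrier \<Gamma>" using a by (auto simp: c_def carrier_HNN)
  have "c \<otimes>\<^bsub>\<Gamma>\<^esub> r \<in> carrier \<Gamma> - hnn_T_dagger G H \<theta> S (-e)"
    if r: "r \<in> carrier \<Gamma> - hnn_T_dagger G H \<theta> S e" for r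
  proof -
    obtain w where w: "w \<in> W" "r = cls w" using r by (auto simp: carrier_HNN)
    then show ?thesis
      using mult_notin_T_dagger[OF e a w(1)] r a by (auto simp: c_def mult_HNN carrier_HNN)
  qed
  then show ?thesis
    unfolding quasi_kernel_def
    using HNN.Inter_conj_set_subset_conj_set[OF emb_H_carrier c,
        of "carrier \<Gamma> - hnn_T_dagger G H \<theta> S e"]
      one_notin_T_dagger HNN.one_closed c
    by blast
qed

end

theorem mainTheorem12:
  fixes G :: "('a, 'm) monoid_scheme" and H :: "'a set" and \<theta> :: "'a \<Rightarrow> 'a"
    and S :: "int \<Rightarrow> 'a set"
  assumes "group G"
    and "subgroup H G"
    and "\<theta> \<in> hom (G\<lparr>carrier := H\<rparr>) G"
    and "inj_on \<theta> H"
    and "non_ascending G H \<theta>"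
    and "left_transversal G (hnn_H H \<theta> (-1)) (S (-1))"
    and "left_transversal G (hnn_H H \<theta> 1) (S 1)"
    and "\<one>\<^bsub>G\<^esub> \<in> S (-1)" and "\<one>\<^bsub>G\<^esub> \<in> S 1"
  shows "normal_closure (HNN G H \<theta>) (quasi_kernel G H \<theta> S (-1))
       = normal_closure (HNN G H \<theta>) (quasi_kernel G H \<theta> S 1)"
proof -
  interpret hnn_normal_forms G H \<theta> S
    using assms unfolding hnn_normal_forms_def hnn_normal_forms_axioms_def by auto
  have "hnn_H H \<theta> e \<noteq> carrier G" if "e \<in> {-1, 1}" for e
    using assms(5) that by (auto simp: non_ascending_def hnn_H_def)
  then obtain c d where
    "c \<in> carrier (HNN G H \<theta>)"
    "quasi_kernel G H \<theta> S (-1) \<subseteq> conj_set (HNN G H \<theta>) c (quasi_kernel G H \<theta> S 1)"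
    "d \<in> carrier (HNN G H \<theta>)"
    "quasi_kernel G H \<theta> S 1 \<subseteq> conj_set (HNN G H \<theta>) d (quasi_kernel G H \<theta> S (-1))"
    using quasi_kernel_subset_conj_set[of 1] quasi_kernel_subset_conj_set[of "-1"] by auto
  then show ?thesis
    using HNN.normal_closure_eq_if_conj quasi_kernel_carrier by blast
qed

end
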